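(* Let $I$ be a composition of $n$ and $k\ge1$. With $V'_I=V_{\overline{I}^{\sim}}$, one has in $\mathbf{Sym}$ $$V'_I\,\Lambda_k=\sum_{j=0}^{n}\binom{k+j-1}{k-1}\,V'_{(I[n-j],\,k+j)},$$ where $(I[n-j],k+j)$ denotes the composition obtained by appending the part $k+j$ to $I[n-j]$.
   Context: Permutations are words. A word $a_1\cdots a_m$ is initially dominated if $a_1>a_j$ for all $j\ge2$; every permutation factors uniquely as $\sigma=u_1\cdots u_r$ into initially dominated words with increasing first letters, and $\mathrm{SC}(\sigma)=(|u_1|,\ldots,|u_r|)$. For a composition $I=(i_1,\ldots,i_r)$ of $n$, $\mathrm{Des}(I)=\{i_1,\ldots,i_1+\cdots+i_{r-1}\}$ and $\overline{I}^{\sim}$ is the composition of $n$ with descent set $\{1,\ldots,n-1\}\setminus\mathrm{Des}(I)$. $\mathrm{RC}(\sigma)$ is the composition with descent set $\{i: i+1\text{ is left of } i\text{ in }\sigma\}$. In $QSym$ (fundamental basis $F_I$) define $U_J=\sum_{\mathrm{SC}(\sigma)=\overline{J}^{\sim}}F_{\mathrm{RC}(\sigma)}$; the $U_J$ form a basis of $QSym$. $\mathbf{Sym}$ is the algebra of noncommutative symmetric functions with ribbon basis $R_I$, in duality with $QSym$ via $\langle F_I,R_J\rangle=\delta_{IJ}$; $(V_I)$ is the basis of $\mathbf{Sym}$ dual to $(U_I)$, and $\Lambda_k=R_{1^k}$ is the noncommutative elementary symmetric function. For $0\le m\le n$, $I[m]$ is the composition of $m$ whose ribbon diagram consists of the first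 $m$ boxes of that of $I$, i.e. $I[m]=(i_1,\ldots,i_{s-1},m-(i_1+\cdots+i_{s-1}))$ for the appropriate $s$ (and $I[0]$ is the empty composition). *)

theory Defs
  imports Complex_Main
begin

definition comps :: "nat \<Rightarrow> nat list set" where
  "comps n = {I. sum_list I = n \<and> 0 \<notin> set I}"

definition perms :: "nat \<Rightarrow> nat list set" where
  "perms n = {s. distinct s \<and> set s = {1..n}}"

definition des :: "nat list \<Rightarrow> nat set" where
  "des I = {sum_list (take j I) | j. 1 \<le> j \<and> j < length I}"

definition comp_of_des :: "nat \<Rightarrow> nat set \<Rightarrow> nat list" where
  "comp_of_des n D = (THE I. I \<in> comps n \<and> des I = D)"

text \<open>The composition with complementary descent set (the paper's I-bar-tilde).\<close>
definition conj :: "nat list \<Rightarrow> nat list" where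
  "conj I = comp_of_des (sum_list I) ({1..<sum_list I} - des I)"

definition init_dom :: "nat list \<Rightarrow> bool" where
  "init_dom w \<longleftrightarrow> w \<noteq> [] \<and> (\<forall>j. 1 \<le> j \<and> j < length w \<longrightarrow> w ! j < w ! 0)"

definition SC :: "nat list \<Rightarrow> nat list" where
  "SC s = (THE L. \<exists>us. concat us = s \<and> (\<forall>u\<in>set us. init_dom u)
              \<and> sorted_wrt (<) (map hd us) \<and> L = map length us)"

definition RC :: "nat list \<Rightarrow> nat list" where
  "RC s = comp_of_des (length s)
     {i. 1 \<le> i \<and> i < length s \<and>
         (\<exists>p q. p < q \<and> q < length s \<and> s ! p = i + 1 \<and> s ! q = i)}"

text \<open>U_J = sum over sigma in S_n with SC(sigma) = conj J of F_(RC sigma);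
  ucoef J K is the coefficient of F_K in U_J.\<close>
definition ucoef :: "nat list \<Rightarrow> nat list \<Rightarrow> nat" where
  "ucoef J K = card {s \<in> perms (sum_list J). SC s = conj J \<and> RC s = K}"

text \<open>Elements of Sym are represented by their coefficient functions in the
  ribbon basis (K \<mapsto> coefficient of R_K).\<close>
type_synonym sym = "nat list \<Rightarrow> rat"

text \<open>Duality pairing <U_J, v> using <F_I, R_K> = delta.\<close>
definition pairU :: "nat list \<Rightarrow> sym \<Rightarrow> rat" where
  "pairU J v = (\<Sum>K\<in>comps (sum_list J). of_nat (ucoef J K) * v K)"

definition V :: "nat list \<Rightarrow> sym" where
  "V I = (THE v. (\<forall>K. K \<notin> comps (sum_list I) \<longrightarrow> v K = 0) \<and>
                 (\<forall>J\<in>comps (sum_list I). pairU J v = (if J = I then 1 else 0)))"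

definition Vp :: "nat list \<Rightarrow> sym" where
  "Vp I = V (conj I)"

text \<open>Ribbon product: R_I R_J = R_(I.J) + R_(I|>J) (second term only if both nonempty).\<close>
definition glue :: "nat list \<Rightarrow> nat list \<Rightarrow> nat list" where
  "glue I J = butlast I @ [last I + hd J] @ tl J"

definition ribcoef :: "nat list \<Rightarrow> nat list \<Rightarrow> nat list \<Rightarrow> rat" where
  "ribcoef I J K = (if K = I @ J then 1 else 0)
      + (if I \<noteq> [] \<and> J \<noteq> [] \<and> K = glue I J then 1 else 0)"

definition symmult :: "sym \<Rightarrow> sym \<Rightarrow> sym" where
  "symmult f g = (\<lambda>K. \<Sum>m\<in>{0..sum_list K}. \<Sum>I\<in>comps m. \<Sum>J\<in>comps (sum_list K - m).
        f I * g J * ribcoef I J K)"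

text \<open>Lambda_k = R_(1^k).\<close>
definition Lambda :: "nat \<Rightarrow> sym" where
  "Lambda k = (\<lambda>K. if K = replicate k 1 then 1 else 0)"

text \<open>I[m]: first m boxes of the ribbon diagram of I.\<close>
fun trunc :: "nat list \<Rightarrow> nat \<Rightarrow> nat list" where
  "trunc [] m = []"
| "trunc (i # I) m = (if m = 0 then [] else if m \<le> i then [m] else i # trunc I (m - i))"

end

theory Submission
  imports Defs
begin

text \<open>
  For a permutation \<open>s\<close> with \<open>SC s = J\<close>, the recoil composition \<open>RC s\<close> is either
  \<open>conj J\<close> or has a strictly smaller descent set, where descent sets are compared from the
  largest element down (\<open>binary_weight\<close>); and the value \<open>conj J\<close> is attained. So the matrix
  of the \<open>U'_J = U_(conj J)\<close> in the fundamental basis is triangular with nonzero diagonal,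
  and a homogeneous element of \<open>Sym\<close> is determined by its pairings with the \<open>U'_J\<close>.

  In \<open>x \<Lambda>_k\<close>, with \<open>x\<close> of degree \<open>n\<close>, the coefficient of \<open>R_(RC s)\<close> for \<open>s \<in> S_(n+k)\<close> is
  \<open>x_(RC \<tau>)\<close> if the letters \<open>n+1, \<dots>, n+k\<close> occur in \<open>s\<close> in decreasing order, where \<open>\<tau>\<close> is
  the restriction of \<open>s\<close> to \<open>1..n\<close>, and \<open>0\<close> otherwise. Hence \<open>\<langle>U'_J, x \<Lambda>_k\<rangle>\<close> is a sum over
  the shuffles of \<open>\<tau>\<close> with \<open>n+k, \<dots>, n+1\<close>. As \<open>n+k\<close> is the largest letter, such a shuffle
  has shape \<open>SC \<tau>[p] \<cdot> (n+k-p)\<close>, \<open>p\<close> being the number of letters of \<open>\<tau>\<close> before \<open>n+k\<close>, and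
  the other \<open>k-1\<close> new letters can be placed in \<open>binom(n+k-1-p, k-1)\<close> ways. For \<open>x = V'_I\<close>
  the pairing is therefore \<open>binom(k+j-1, k-1)\<close> at \<open>J = (I[n-j], k+j)\<close> and \<open>0\<close> elsewhere,
  which is the pairing of the right-hand side.
\<close>

section \<open>Compositions and descent sets\<close>

lemma finite_comps: "finite (comps n)"
proof -
  have "comps n \<subseteq> {xs. set xs \<subseteq> {0..n} \<and> length xs \<le> n}"
  proof
    fix I assume "I \<in> comps n"
    hence s: "sum_list I = n" and z: "0 \<notin> set I" by (auto simp: comps_def)
    have "length I \<le> sum_list I" using z
      by (induction I) (auto simp: Suc_le_eq)
    moreover have "set I \<subseteq> {0..n}" using s
      by (auto simp: member_le_sum_list)
    ultimately show "I \<in> {xs. set xs \<subseteq> {0..n} \<and> length xs \<le> n}" using s by auto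
  qed
  thus ?thesis by (rule finite_subset) (rule finite_lists_length_le, simp)
qed

lemma comps_0: "comps 0 = {[]}"
  by (auto simp: comps_def) (metis list.set_intros(1) neq_Nil_conv sum_list_eq_0_iff)

lemma snoc_in_comps_iff: "I @ [a] \<in> comps m \<longleftrightarrow> I \<in> comps (m - a) \<and> 0 < a \<and> a \<le> m"
  by (auto simp: comps_def)

lemma sum_list_pos_if_in_comps: "I \<in> comps n \<Longrightarrow> I \<noteq> [] \<Longrightarrow> 0 < sum_list I"
  by (cases I) (auto simp: comps_def)

lemma des_Nil [simp]: "des [] = {}"
  by (simp add: des_def)

lemma des_singleton [simp]: "des [a] = {}"
  by (simp add: des_def)

lemma des_snoc: "des (I @ [a]) = (if I = [] then {} else insert (sum_list I) (des I))"
proof -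
  have "des (I @ [a]) = (\<lambda>j. sum_list (take j I)) ` {1..length I}"
    unfolding des_def by (force simp: less_Suc_eq_le)
  also have "\<dots> = (if I = [] then {} else insert (sum_list I) (des I))"
  proof (cases "I = []")
    case False
    hence "{1..length I} = insert (length I) {1..<length I}" by (cases I) auto
    moreover have "(\<lambda>j. sum_list (take j I)) ` {1..<length I} = des I"
      unfolding des_def by auto
    ultimately show ?thesis using False by simp
  qed simp
  finally show ?thesis .
qed

lemma des_subset: "I \<in> comps n \<Longrightarrow> des I \<subseteq> {1..<n}"
proof (induction I arbitrary: n rule: rev_induct)
  case (snoc a I)
  hence I: "I \<in> comps (n - a)" and "0 < a" "a \<le> n" by (auto simp: snoc_in_comps_iff)
  hence "des I \<subseteq> {1..<n}" using snoc.IH by fastforce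
  moreover have "I \<noteq> [] \<Longrightarrow> sum_list I \<in> {1..<n}"
    using sum_list_pos_if_in_comps[OF I] I \<open>0 < a\<close> \<open>a \<le> n\<close> by (auto simp: comps_def)
  ultimately show ?case by (auto simp: des_snoc)
qed simp

lemma des_snoc_inter: "I \<in> comps m \<Longrightarrow> des (I @ [a]) \<inter> {..<m} = des I"
  using des_subset[of I m] by (auto simp: des_snoc comps_def)

lemma Max_des_snoc: "I \<in> comps m \<Longrightarrow> I \<noteq> [] \<Longrightarrow> Max (des (I @ [a])) = m"
  using des_subset[of I m] by (intro Max_eqI) (auto simp: des_snoc comps_def finite_subset)

text \<open>A composition is recovered from its descent set by peeling off the last part, which
  is determined by the largest descent.\<close>

lemma inj_on_des: "inj_on des (comps n)"
proof
  fix I J assume "I \<in> comps n" "J \<in> comps n" "des I = des J"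
  thus "I = J"
  proof (induction I arbitrary: J n rule: rev_induct)
    case Nil
    hence "n = 0" by (simp add: comps_def)
    thus ?case using Nil.prems comps_0 by auto
  next
    case (snoc a I)
    have "J \<noteq> []" using snoc.prems by (auto simp: comps_def)
    then obtain J' b where J: "J = J' @ [b]" by (metis rev_exhaust)
    have I: "I \<in> comps (n - a)" and J': "J' \<in> comps (n - b)"
      using snoc.prems J by (auto simp: snoc_in_comps_iff)
    have "n - a = n - b"
    proof (cases "I = []")
      case True
      hence "J' = []" using snoc.prems(3) J by (auto simp: des_snoc split: if_splits)
      thus ?thesis using True I J' by (simp add: comps_def)
    next
      case False
      hence "J' \<noteq> []" using snoc.prems(3) J by (auto simp: des_snoc split: if_splits)
      thus ?thesis using Max_des_snoc[OF I False, of a] Max_des_snoc[OF J', of b] snoc.prems(3) J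
        by simp
    qed
    hence ab: "a = b" using snoc.prems J by (auto simp: snoc_in_comps_iff)
    have "des I = des J'"
      using des_snoc_inter[OF I, of a] des_snoc_inter[OF J', of b] snoc.prems(3) J ab by simp
    hence "I = J'" using snoc.IH I J' ab by blast
    thus ?case using J ab by simp
  qed
qed

lemma des_surj: "D \<subseteq> {1..<n} \<Longrightarrow> \<exists>I\<in>comps n. des I = D"
proof (induction n arbitrary: D rule: less_induct)
  case (less n)
  show ?case
  proof (cases "D = {}")
    case True
    have "(if n = 0 then [] else [n]) \<in> comps n" by (simp add: comps_def)
    thus ?thesis using True by (intro bexI) (auto simp: des_def)
  next
    case False
    have fin: "finite D" using less.prems finite_subset by blast
    define d where "d = Max D"
    have dD: "d \<in> D" using False fin by (simp add: d_def)
    hence dn: "1 \<le> d" "d < n" using less.prems by auto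
    have "D - {d} \<subseteq> {1..<d}" using fin less.prems by (auto simp: d_def less_le)
    then obtain I where I: "I \<in> comps d" "des I = D - {d}" using less.IH[OF dn(2)] by blast
    have "I \<noteq> []" using I(1) dn by (auto simp: comps_def)
    hence "I @ [n - d] \<in> comps n" "des (I @ [n - d]) = D"
      using I dn dD by (auto simp: comps_def des_snoc)
    thus ?thesis by blast
  qed
qed

lemma des_eq_iff: "I \<in> comps n \<Longrightarrow> J \<in> comps n \<Longrightarrow> des I = des J \<longleftrightarrow> I = J"
  using inj_on_des[of n] unfolding inj_on_def by blast

lemma
  assumes "D \<subseteq> {1..<n}"
  shows comp_of_des_in_comps: "comp_of_des n D \<in> comps n"
    and des_comp_of_des: "des (comp_of_des n D) = D"
proof -
  obtain I where I: "I \<in> comps n" "des I = D" using des_surj[OF assms] by blast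
  have "comp_of_des n D = I" unfolding comp_of_des_def
  proof (rule the_equality)
    fix J assume "J \<in> comps n \<and> des J = D"
    thus "J = I" using I des_eq_iff[of J n I] by simp
  qed (use I in simp)
  thus "comp_of_des n D \<in> comps n" "des (comp_of_des n D) = D" using I by auto
qed

lemma comp_of_des_des:
  assumes "I \<in> comps n"
  shows "comp_of_des n (des I) = I"
proof -
  have "des I \<subseteq> {1..<n}" using des_subset[OF assms] .
  hence "comp_of_des n (des I) \<in> comps n" "des (comp_of_des n (des I)) = des I"
    by (rule comp_of_des_in_comps, rule des_comp_of_des)
  thus ?thesis using des_eq_iff[of "comp_of_des n (des I)" n I] assms by blast
qed

lemma
  assumes "I \<in> comps n"
  shows conj_in_comps: "conj I \<in> comps n"
    and des_conj: "des (conj I) = {1..<n} - des I"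
    and conj_conj: "conj (conj I) = I"
proof -
  have s: "sum_list I = n" using assms by (simp add: comps_def)
  have D: "{1..<n} - des I \<subseteq> {1..<n}" by blast
  show c: "conj I \<in> comps n" "des (conj I) = {1..<n} - des I"
    unfolding conj_def s using comp_of_des_in_comps[OF D] des_comp_of_des[OF D] by simp_all
  have "conj (conj I) = comp_of_des n ({1..<n} - ({1..<n} - des I))"
    using c unfolding conj_def[of "conj I"] by (simp add: comps_def)
  also have "{1..<n} - ({1..<n} - des I) = des I" using des_subset[OF assms] by auto
  finally show "conj (conj I) = I" using comp_of_des_des[OF assms] by simp
qed

lemma trunc_in_comps: "I \<in> comps n \<Longrightarrow> m \<le> n \<Longrightarrow> trunc I m \<in> comps m"
proof (induction I arbitrary: n m)
  case (Cons i I)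
  hence "I \<in> comps (n - i)" by (auto simp: comps_def)
  hence "m - i \<le> n - i \<Longrightarrow> trunc I (m - i) \<in> comps (m - i)" using Cons.IH by blast
  thus ?case using Cons.prems by (auto simp: comps_def)
qed (simp add: comps_def)

section \<open>Factorisation into initially dominated words\<close>

definition dom_factorization :: "nat list list \<Rightarrow> nat list \<Rightarrow> bool" where
  "dom_factorization us s \<longleftrightarrow>
     concat us = s \<and> (\<forall>u\<in>set us. init_dom u) \<and> sorted_wrt (<) (map hd us)"

lemma init_dom_not_Nil: "init_dom u \<Longrightarrow> u \<noteq> []"
  by (simp add: init_dom_def)

lemma init_dom_le_hd:
  assumes "init_dom u" "x \<in> set u"
  shows "x \<le> hd u"
proof -
  obtain j where j: "j < length u" "u ! j = x" using assms(2) by (auto simp: in_set_conv_nth)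
  thus ?thesis using assms(1) unfolding init_dom_def
    by (cases "j = 0") (auto simp: hd_conv_nth less_imp_le_nat)
qed

lemma init_dom_Cons: "\<forall>y\<in>set ys. y < m \<Longrightarrow> init_dom (m # ys)"
  unfolding init_dom_def by (auto simp: nth_Cons')

lemma init_dom_take: "init_dom u \<Longrightarrow> 0 < m \<Longrightarrow> init_dom (take m u)"
  unfolding init_dom_def by (auto simp: nth_take)

lemma dom_factorization_Nil_iff: "dom_factorization us [] \<longleftrightarrow> us = []"
  unfolding dom_factorization_def by (cases us) (auto simp: init_dom_def)

lemma hd_mem_concat:
  assumes "dom_factorization us s" "u \<in> set us"
  shows "hd u \<in> set s"
proof -
  have "u \<noteq> []" using assms by (auto simp: dom_factorization_def dest: init_dom_not_Nil)
  hence "hd u \<in> set u" by simp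
  hence "hd u \<in> set (concat us)" using assms(2) by auto
  moreover have "concat us = s" using assms(1) by (simp add: dom_factorization_def)
  ultimately show ?thesis by metis
qed

lemma dom_factorization_le_last:
  assumes "dom_factorization (us @ [u]) s" "x \<in> set s"
  shows "x \<le> hd u"
proof -
  have "x \<in> set (concat (us @ [u]))" using assms by (simp add: dom_factorization_def)
  then obtain v where v: "v \<in> set (us @ [u])" "x \<in> set v" unfolding set_concat by blast
  have "x \<le> hd v" using v assms(1) init_dom_le_hd by (auto simp: dom_factorization_def)
  also have "hd v \<le> hd u"
    using v assms(1) by (auto simp: dom_factorization_def sorted_wrt_append)
  finally show ?thesis .
qed

lemma dom_factorization_snoc_max:
  assumes "dom_factorization us xs" "\<forall>x\<in>set xs. x < m" "\<forall>y\<in>set ys. y < m"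
  shows "dom_factorization (us @ [m # ys]) (xs @ m # ys)"
proof -
  have "\<forall>u\<in>set us. hd u < m" using assms(1,2) hd_mem_concat by blast
  thus ?thesis using assms init_dom_Cons
    by (auto simp: dom_factorization_def sorted_wrt_append)
qed

lemma dom_factorization_exists: "distinct s \<Longrightarrow> \<exists>us. dom_factorization us s"
proof (induction "length s" arbitrary: s rule: less_induct)
  case less
  show ?case
  proof (cases "s = []")
    case True thus ?thesis using dom_factorization_Nil_iff by blast
  next
    case False
    define m where "m = Max (set s)"
    have "m \<in> set s" using False by (simp add: m_def)
    then obtain xs ys where s: "s = xs @ m # ys" by (meson split_list)
    have "\<forall>x\<in>set s. x \<le> m" by (simp add: m_def)
    hence "\<forall>x\<in>set xs. x < m" "\<forall>y\<in>set ys. y < m" using s less.prems by (auto simp: le_less)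
    moreover obtain us where "dom_factorization us xs" using less.hyps[of xs] less.prems s by auto
    ultimately show ?thesis using s dom_factorization_snoc_max by blast
  qed
qed

lemma dom_factorization_unique:
  "dom_factorization us s \<Longrightarrow> dom_factorization vs s \<Longrightarrow> distinct s \<Longrightarrow> us = vs"
proof (induction us arbitrary: vs s rule: rev_induct)
  case Nil
  hence "s = []" by (simp add: dom_factorization_def)
  thus ?case using Nil.prems(2) dom_factorization_Nil_iff by simp
next
  case (snoc u us)
  have "u \<noteq> []" using snoc.prems(1) init_dom_not_Nil by (simp add: dom_factorization_def)
  moreover have "concat us @ u = s" using snoc.prems(1) by (simp add: dom_factorization_def)
  ultimately have "s \<noteq> []" by auto
  hence "vs \<noteq> []" using snoc.prems(2) by (auto simp: dom_factorization_def)
  then obtain vs' v where vs: "vs = vs' @ [v]" by (metis rev_exhaust)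
  have "v \<noteq> []" using snoc.prems(2) vs init_dom_not_Nil by (simp add: dom_factorization_def)
  have s1: "s = concat us @ hd u # tl u" and s2: "s = concat vs' @ hd v # tl v"
    using snoc.prems vs \<open>u \<noteq> []\<close> \<open>v \<noteq> []\<close> by (simp_all add: dom_factorization_def)
  have "hd v \<le> hd u" using dom_factorization_le_last[OF snoc.prems(1)] s2 by simp
  moreover have "hd u \<le> hd v" using dom_factorization_le_last[of vs' v s] snoc.prems(2) vs s1
    by simp
  ultimately have h: "hd u = hd v" by simp
  have "hd u \<notin> set (concat us)" "hd u \<notin> set (tl u)"
    using snoc.prems(3) s1 by auto
  moreover have "concat us @ hd u # tl u = concat vs' @ hd u # tl v" using s1 s2 h by simp
  ultimately have eq: "concat us = concat vs' \<and> tl u = tl v"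
    by (simp add: append_Cons_eq_iff)
  hence "u = v" using \<open>u \<noteq> []\<close> \<open>v \<noteq> []\<close> h by (intro list.expand) auto
  have "dom_factorization us (concat us)" "dom_factorization vs' (concat us)"
    using snoc.prems(1,2) vs eq by (auto simp: dom_factorization_def sorted_wrt_append)
  moreover have "distinct (concat us)" using snoc.prems(3) s1 by simp
  ultimately have "us = vs'" using snoc.IH by blast
  thus ?case using vs \<open>u = v\<close> by simp
qed

lemma SC_eq_map_length:
  assumes "dom_factorization us s" "distinct s"
  shows "SC s = map length us"
  unfolding SC_def
proof (rule the_equality)
  fix L
  assume "\<exists>us. concat us = s \<and> (\<forall>u\<in>set us. init_dom u) \<and> sorted_wrt (<) (map hd us)
           \<and> L = map length us"
  then obtain vs where "dom_factorization vs s" "L = map length vs"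
    unfolding dom_factorization_def by blast
  thus "L = map length us" using dom_factorization_unique assms by blast
qed (use assms in \<open>auto simp: dom_factorization_def\<close>)

lemma SC_in_comps:
  assumes "distinct s"
  shows "SC s \<in> comps (length s)"
proof -
  obtain us where us: "dom_factorization us s" using dom_factorization_exists assms by blast
  hence "0 \<notin> set (map length us)" "sum_list (map length us) = length s"
    by (auto simp: dom_factorization_def length_concat dest: init_dom_not_Nil)
  thus ?thesis using SC_eq_map_length[OF us assms] by (simp add: comps_def)
qed

lemma SC_Nil [simp]: "SC [] = []"
  using SC_eq_map_length[of "[]" "[]"] by (simp add: dom_factorization_def)

lemma SC_append_max:
  assumes "distinct (xs @ m # ys)" "\<forall>x\<in>set xs. x < m" "\<forall>y\<in>set ys. y < m"
  shows "SC (xs @ m # ys) = SC xs @ [length ys + 1]"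
proof -
  obtain us where us: "dom_factorization us xs" using dom_factorization_exists assms(1) by auto
  hence "dom_factorization (us @ [m # ys]) (xs @ m # ys)"
    using assms(2,3) by (rule dom_factorization_snoc_max)
  thus ?thesis using SC_eq_map_length assms(1) us by simp
qed

fun take_blocks :: "nat list list \<Rightarrow> nat \<Rightarrow> nat list list" where
  "take_blocks [] m = []"
| "take_blocks (u # us) m =
     (if m = 0 then [] else if m \<le> length u then [take m u] else u # take_blocks us (m - length u))"

lemma concat_take_blocks: "\<forall>u\<in>set us. u \<noteq> [] \<Longrightarrow> concat (take_blocks us m) = take m (concat us)"
  by (induction us arbitrary: m) (auto simp: take_append)

lemma map_length_take_blocks: "map length (take_blocks us m) = trunc (map length us) m"
  by (induction us arbitrary: m) auto

lemma map_hd_take_blocks: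
  "\<forall>u\<in>set us. u \<noteq> [] \<Longrightarrow> map hd (take_blocks us m) = take (length (take_blocks us m)) (map hd us)"
  by (induction us arbitrary: m) (auto simp: hd_take)

lemma dom_factorization_take:
  assumes "dom_factorization us s"
  shows "dom_factorization (take_blocks us m) (take m s)"
proof -
  have dom: "\<forall>u\<in>set us. init_dom u" using assms by (simp add: dom_factorization_def)
  hence ne: "\<forall>u\<in>set us. u \<noteq> []" by (auto dest: init_dom_not_Nil)
  have "\<forall>u\<in>set (take_blocks us m). init_dom u"
    using dom by (induction us arbitrary: m) (auto intro: init_dom_take)
  moreover have "sorted_wrt (<) (map hd (take_blocks us m))"
    unfolding map_hd_take_blocks[OF ne] using assms
    by (simp add: dom_factorization_def sorted_wrt_take)
  ultimately show ?thesis using assms concat_take_blocks[OF ne]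
    by (simp add: dom_factorization_def)
qed

lemma SC_take:
  assumes "distinct s"
  shows "SC (take p s) = trunc (SC s) p"
proof -
  obtain us where us: "dom_factorization us s" using dom_factorization_exists assms by blast
  have "SC (take p s) = map length (take_blocks us p)"
    using SC_eq_map_length dom_factorization_take[OF us] assms by simp
  also have "\<dots> = trunc (SC s) p"
    using map_length_take_blocks SC_eq_map_length[OF us assms] by simp
  finally show ?thesis .
qed

section \<open>Recoils\<close>

definition occurs_before :: "nat list \<Rightarrow> nat \<Rightarrow> nat \<Rightarrow> bool" where
  "occurs_before s a b \<longleftrightarrow> (\<exists>p q. p < q \<and> q < length s \<and> s ! p = a \<and> s ! q = b)"

definition recoils :: "nat list \<Rightarrow> nat set" where
  "recoils s = {i. 1 \<le> i \<and> i < length s \<and> occurs_before s (i + 1) i}"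

lemma occurs_before_Nil [simp]: "\<not> occurs_before [] a b"
  by (simp add: occurs_before_def)

lemma occurs_before_Cons:
  "occurs_before (x # xs) a b \<longleftrightarrow> (x = a \<and> b \<in> set xs) \<or> occurs_before xs a b"
proof
  assume "occurs_before (x # xs) a b"
  then obtain p q where pq: "p < q" "q < length (x # xs)" "(x # xs) ! p = a" "(x # xs) ! q = b"
    by (auto simp: occurs_before_def)
  then obtain q' where q: "q = Suc q'" by (cases q) auto
  show "(x = a \<and> b \<in> set xs) \<or> occurs_before xs a b"
  proof (cases p)
    case 0 thus ?thesis using pq q by auto
  next
    case (Suc p')
    hence "p' < q'" "q' < length xs" "xs ! p' = a" "xs ! q' = b" using pq q by auto
    thus ?thesis unfolding occurs_before_def by blast
  qed
next
  assume "(x = a \<and> b \<in> set xs) \<or> occurs_before xs a b"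
  thus "occurs_before (x # xs) a b"
  proof
    assume h: "x = a \<and> b \<in> set xs"
    then obtain j where "j < length xs" "xs ! j = b" by (auto simp: in_set_conv_nth)
    hence "0 < Suc j" "Suc j < length (x # xs)" "(x # xs) ! 0 = a" "(x # xs) ! Suc j = b"
      using h by auto
    thus ?thesis unfolding occurs_before_def by blast
  next
    assume "occurs_before xs a b"
    then obtain p q where "p < q" "q < length xs" "xs ! p = a" "xs ! q = b"
      by (auto simp: occurs_before_def)
    hence "Suc p < Suc q" "Suc q < length (x # xs)" "(x # xs) ! Suc p = a" "(x # xs) ! Suc q = b"
      by auto
    thus ?thesis unfolding occurs_before_def by blast
  qed
qed

lemma occurs_before_mem: "occurs_before xs a b \<Longrightarrow> a \<in> set xs \<and> b \<in> set xs"
  by (induction xs) (auto simp: occurs_before_Cons)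

lemma occurs_before_append:
  "occurs_before (xs @ ys) a b \<longleftrightarrow>
     occurs_before xs a b \<or> occurs_before ys a b \<or> (a \<in> set xs \<and> b \<in> set ys)"
  by (induction xs) (auto simp: occurs_before_Cons)

lemma occurs_before_filter:
  "P a \<Longrightarrow> P b \<Longrightarrow> occurs_before (filter P xs) a b \<longleftrightarrow> occurs_before xs a b"
  by (induction xs) (auto simp: occurs_before_Cons)

lemma occurs_before_rev_upt: "occurs_before (rev [a..<b]) x y \<longleftrightarrow> a \<le> y \<and> y < x \<and> x < b"
  by (induction b) (auto simp: occurs_before_append occurs_before_Cons)

lemma occurs_before_trans:
  assumes "distinct xs" "occurs_before xs a b" "occurs_before xs b c"
  shows "occurs_before xs a c"
proof -
  obtain p q where 1: "p < q" "q < length xs" "xs ! p = a" "xs ! q = b"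
    using assms(2) by (auto simp: occurs_before_def)
  obtain q' r where 2: "q' < r" "r < length xs" "xs ! q' = b" "xs ! r = c"
    using assms(3) by (auto simp: occurs_before_def)
  have "q = q'" using 1 2 assms(1) nth_eq_iff_index_eq by fastforce
  thus ?thesis using 1 2 unfolding occurs_before_def by (intro exI[of _ p] exI[of _ r]) auto
qed

lemma occurs_before_asym:
  assumes "distinct xs" "occurs_before xs a b"
  shows "\<not> occurs_before xs b a"
proof
  assume "occurs_before xs b a"
  obtain p q where 1: "p < q" "q < length xs" "xs ! p = a" "xs ! q = b"
    using assms(2) by (auto simp: occurs_before_def)
  obtain q' r where 2: "q' < r" "r < length xs" "xs ! q' = b" "xs ! r = a"
    using \<open>occurs_before xs b a\<close> by (auto simp: occurs_before_def)
  have "q = q'" "p = r" using 1 2 assms(1) nth_eq_iff_index_eq by fastforce+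
  thus False using 1 2 by simp
qed

lemma occurs_before_chain:
  assumes "distinct xs" "\<forall>c. a \<le> c \<and> c < b \<longrightarrow> occurs_before xs (c + 1) c" "a < b"
  shows "occurs_before xs b a"
  using assms(2,3)
proof (induction b)
  case (Suc b)
  show ?case
  proof (cases "a = b")
    case False
    hence "occurs_before xs b a" using Suc by auto
    moreover have "occurs_before xs (Suc b) b" using Suc.prems by auto
    ultimately show ?thesis using occurs_before_trans assms(1) by blast
  qed (use Suc.prems in auto)
qed simp

lemma recoils_subset: "recoils s \<subseteq> {1..<length s}"
  by (auto simp: recoils_def)

lemma RC_eq_comp_of_des: "RC s = comp_of_des (length s) (recoils s)"
  by (simp add: RC_def recoils_def occurs_before_def)

lemma RC_in_comps: "RC s \<in> comps (length s)"
  unfolding RC_eq_comp_of_des by (rule comp_of_des_in_comps[OF recoils_subset])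

lemma des_RC: "des (RC s) = recoils s"
  unfolding RC_eq_comp_of_des by (rule des_comp_of_des[OF recoils_subset])

lemma length_perms: "s \<in> perms n \<Longrightarrow> length s = n"
  unfolding perms_def using distinct_card by fastforce

lemma finite_perms: "finite (perms n)"
proof -
  have "perms n \<subseteq> {xs. set xs \<subseteq> {1..n} \<and> length xs \<le> n}"
    using length_perms by (auto simp: perms_def)
  thus ?thesis by (rule finite_subset) (rule finite_lists_length_le, simp)
qed

lemma RC_perm_in_comps: "s \<in> perms n \<Longrightarrow> RC s \<in> comps n"
  using RC_in_comps length_perms by metis

lemma RC_eq_iff:
  assumes "s \<in> perms n" "K \<in> comps n"
  shows "RC s = K \<longleftrightarrow> recoils s = des K"
  using des_eq_iff[OF RC_perm_in_comps[OF assms(1)] assms(2)] des_RC by simp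

lemma filter_le_in_perms: "s \<in> perms N \<Longrightarrow> n \<le> N \<Longrightarrow> filter (\<lambda>x. x \<le> n) s \<in> perms n"
  by (auto simp: perms_def)

lemma recoils_filter_le:
  assumes "s \<in> perms N" "n \<le> N"
  shows "recoils (filter (\<lambda>x. x \<le> n) s) = recoils s \<inter> {1..<n}"
proof -
  have "length (filter (\<lambda>x. x \<le> n) s) = n" "length s = N"
    using assms length_perms filter_le_in_perms by blast+
  moreover have "i < n \<Longrightarrow>
      occurs_before (filter (\<lambda>x. x \<le> n) s) (i + 1) i \<longleftrightarrow> occurs_before s (i + 1) i" for i
    by (intro occurs_before_filter) auto
  ultimately show ?thesis using assms(2) by (auto simp: recoils_def)
qed

lemma recoils_append:
  assumes "distinct (xs @ ys)" "set xs = {1..q}" "\<forall>y\<in>set ys. q < y"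
  shows "recoils (xs @ ys) =
    recoils xs \<union> {i. q < i \<and> i < length (xs @ ys) \<and> occurs_before ys (i + 1) i}"
proof -
  have lx: "length xs = q" using assms distinct_card[of xs] by simp
  have "i \<notin> set ys \<or> i + 1 \<notin> set xs" for i using assms(2,3) by fastforce
  moreover have "i \<in> set xs \<longleftrightarrow> 1 \<le> i \<and> i \<le> q" for i using assms(2) by auto
  ultimately show ?thesis using lx assms(3)
    by (auto simp: recoils_def occurs_before_append dest: occurs_before_mem)
qed

section \<open>Triangularity of the shape-versus-recoil statistics\<close>

lemma eq_rev_upt_if_occurs_before_Suc:
  assumes "distinct f" "set f = {a..<b}" "\<forall>c. a \<le> c \<and> Suc c < b \<longrightarrow> occurs_before f (Suc c) c"
  shows "f = rev [a..<b]"
proof -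
  have "f ! j < f ! i" if ij: "i < j" "j < length f" for i j
  proof (rule ccontr)
    assume "\<not> f ! j < f ! i"
    moreover have "f ! i \<noteq> f ! j" using assms(1) ij by (simp add: nth_eq_iff_index_eq)
    ultimately have lt: "f ! i < f ! j" by simp
    have "f ! i \<in> set f" "f ! j \<in> set f" using ij by simp_all
    hence "\<forall>c. f ! i \<le> c \<and> c < f ! j \<longrightarrow> occurs_before f (c + 1) c" using assms(2,3) by auto
    hence "occurs_before f (f ! j) (f ! i)" using occurs_before_chain[OF assms(1) _ lt] by blast
    moreover have "occurs_before f (f ! i) (f ! j)" unfolding occurs_before_def using ij by blast
    ultimately show False using occurs_before_asym[OF assms(1)] by blast
  qed
  hence "sorted_wrt (\<lambda>x y. y < x) f" by (simp add: sorted_wrt_iff_nth_less)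
  hence "sorted_wrt (<) (rev f)" by (simp add: sorted_wrt_rev)
  hence "rev f = [a..<b]" using assms(2) by (intro strict_sorted_equal) (simp_all add: sorted_wrt_upt)
  thus ?thesis by (metis rev_rev_ident)
qed

lemma filter_greater_eq_rev_upt_iff:
  assumes "s \<in> perms N" "n \<le> N"
  shows "filter (\<lambda>x. n < x) s = rev [n+1..<N+1] \<longleftrightarrow> {n+1..<N} \<subseteq> recoils s"
proof -
  have len: "length s = N" using length_perms[OF assms(1)] .
  have trans: "occurs_before (filter (\<lambda>x. n < x) s) (Suc c) c \<longleftrightarrow> occurs_before s (Suc c) c"
    if "n < c" for c using that by (intro occurs_before_filter) auto
  show ?thesis
  proof
    assume f: "filter (\<lambda>x. n < x) s = rev [n+1..<N+1]"
    show "{n+1..<N} \<subseteq> recoils s"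
    proof
      fix i assume i: "i \<in> {n+1..<N}"
      hence "occurs_before (filter (\<lambda>x. n < x) s) (Suc i) i"
        unfolding f occurs_before_rev_upt by simp
      thus "i \<in> recoils s" using trans[of i] i len by (simp add: recoils_def)
    qed
  next
    assume top: "{n+1..<N} \<subseteq> recoils s"
    have "distinct (filter (\<lambda>x. n < x) s)" "set (filter (\<lambda>x. n < x) s) = {n+1..<N+1}"
      using assms(1) by (auto simp: perms_def)
    moreover have "occurs_before (filter (\<lambda>x. n < x) s) (Suc c) c" if "n + 1 \<le> c" "Suc c < N + 1" for c
      using that top trans[of c] by (auto simp: recoils_def)
    ultimately show "filter (\<lambda>x. n < x) s = rev [n+1..<N+1]"
      by (intro eq_rev_upt_if_occurs_before_Suc) auto
  qed
qed

text \<open>Comparing \<open>\<Sum>i\<in>X. 2^i\<close> compares sets of positions by their largest element first.\<close>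

definition binary_weight :: "nat set \<Rightarrow> nat" where
  "binary_weight X = (\<Sum>i\<in>X. 2 ^ i)"

lemma binary_weight_atLeastAtMost_less: "binary_weight {1..q} < 2 ^ (q + 1)"
proof (induction q)
  case (Suc q)
  have "{1..Suc q} = insert (Suc q) {1..q}" by auto
  thus ?case using Suc by (simp add: binary_weight_def)
qed (simp add: binary_weight_def)

lemma binary_weight_less_if_missing:
  assumes "X \<subseteq> {1..<N}" "q < i" "i < N" "i \<notin> X"
  shows "binary_weight X < binary_weight {q+1..<N}"
proof -
  have "binary_weight X \<le> binary_weight ({1..q} \<union> ({q+1..<N} - {i}))"
    unfolding binary_weight_def using assms by (intro sum_mono2) auto
  also have "\<dots> = binary_weight {1..q} + binary_weight ({q+1..<N} - {i})"
    unfolding binary_weight_def by (intro sum.union_disjoint) auto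
  also have "\<dots> < 2 ^ i + binary_weight ({q+1..<N} - {i})"
    using binary_weight_atLeastAtMost_less[of q] power_increasing[of "q + 1" i "2::nat"] assms(2)
    by simp
  also have "\<dots> = binary_weight {q+1..<N}"
    unfolding binary_weight_def using assms(2,3) by (subst sum.remove[of _ i]) auto
  finally show ?thesis .
qed

lemma compl_des_snoc:
  assumes "I \<in> comps q" "0 < a"
  shows "{1..<q + a} - des (I @ [a]) = ({1..<q} - des I) \<union> {q+1..<q + a}"
proof (cases "I = []")
  case True
  hence "q = 0" using assms(1) by (simp add: comps_def)
  thus ?thesis using True by auto
next
  case False
  thus ?thesis using des_subset[OF assms(1)] assms(1) by (auto simp: des_snoc comps_def)
qed

lemma perm_split_max:
  assumes "s \<in> perms N" "0 < N"
  obtains xs ys where "s = xs @ N # ys" "distinct s" "\<forall>x\<in>set (xs @ ys). x < N"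
proof -
  have ds: "distinct s" and ss: "set s = {1..N}" using assms by (auto simp: perms_def)
  then obtain xs ys where s: "s = xs @ N # ys" using assms(2) by (metis atLeastAtMost_iff
        le_refl less_one not_less split_list)
  hence "\<forall>x\<in>set (xs @ ys). x < N" using ds ss by fastforce
  thus ?thesis using that s ds by simp
qed

lemma compl_des_SC_perm:
  assumes "s = xs @ N # ys" "distinct s" "\<forall>x\<in>set (xs @ ys). x < N"
  shows "{1..<length s} - des (SC s) = ({1..<length xs} - des (SC xs)) \<union> {length xs + 1..<length s}"
proof -
  have "SC xs \<in> comps (length xs)" using SC_in_comps assms(1,2) by simp
  moreover have "SC s = SC xs @ [length ys + 1]" using SC_append_max[of xs N ys] assms by simp
  ultimately show ?thesis using compl_des_snoc[of "SC xs" "length xs" "length ys + 1"] assms(1)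
    by simp
qed

lemma perm_top_recoils:
  assumes s: "s \<in> perms N" "s = xs @ N # ys" and top: "{length xs + 1..<N} \<subseteq> recoils s"
  shows "xs \<in> perms (length xs)" "recoils s = recoils xs \<union> {length xs + 1..<N}"
proof -
  define q where "q = length xs"
  have qN: "q < N" using length_perms[OF s(1)] s(2) q_def by simp
  have "{q+1..<N} \<subseteq> recoils s" using top q_def by simp
  hence f: "filter (\<lambda>x. q < x) s = rev [q+1..<N+1]"
    using filter_greater_eq_rev_upt_iff[OF s(1) less_imp_le[OF qN]] by blast
  have ds: "distinct s" and ss: "set s = {1..N}" using s(1) by (auto simp: perms_def)
  have "filter (\<lambda>x. q < x) xs = []"
  proof (rule ccontr)
    assume "filter (\<lambda>x. q < x) xs \<noteq> []"
    then obtain y ys' where "filter (\<lambda>x. q < x) xs = y # ys'" by (cases "filter (\<lambda>x. q < x) xs") auto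
    hence "y = N" using f s(2) qN by simp
    moreover have "y \<in> set xs" using \<open>filter (\<lambda>x. q < x) xs = y # ys'\<close>
      by (metis filter_is_subset list.set_intros(1) subsetD)
    ultimately show False using ds s(2) by simp
  qed
  moreover have "set xs \<subseteq> {1..N}" using ss s(2) by auto
  ultimately have "set xs \<subseteq> {1..q}" by (force simp: filter_empty_conv)
  moreover have "card (set xs) = q" using ds s(2) q_def by (simp add: distinct_card)
  ultimately have sx: "set xs = {1..q}" by (simp add: card_subset_eq)
  thus "xs \<in> perms (length xs)" using ds s(2) q_def by (simp add: perms_def)
  have "\<forall>y\<in>set ys. y \<in> {1..N} \<and> y \<notin> {1..q}" using ds ss s(2) sx by auto
  hence "\<forall>y\<in>set (N # ys). q < y" using qN by auto
  hence "recoils s = recoils xs \<union> {i. q < i \<and> i < N \<and> occurs_before (N # ys) (i + 1) i}"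
    using recoils_append[of xs "N # ys" q] ds s sx length_perms[OF s(1)] by simp
  also have "{i. q < i \<and> i < N \<and> occurs_before (N # ys) (i + 1) i} = {q+1..<N}"
  proof -
    have "occurs_before (N # ys) (i + 1) i \<longleftrightarrow> occurs_before s (i + 1) i" if "q < i" for i
      using that sx s(2) by (auto simp: occurs_before_append dest: occurs_before_mem)
    thus ?thesis using top q_def by (auto simp: recoils_def)
  qed
  finally show "recoils s = recoils xs \<union> {length xs + 1..<N}" using q_def by simp
qed

lemma recoils_triangular:
  "s \<in> perms N \<Longrightarrow> recoils s = {1..<N} - des (SC s) \<or>
     binary_weight (recoils s) < binary_weight ({1..<N} - des (SC s))"
proof (induction N arbitrary: s rule: less_induct)
  case (less N)
  show ?case
  proof (cases "N = 0")
    case True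
    thus ?thesis using length_perms[OF less.prems] by (simp add: recoils_def)
  next
    case False
    then obtain xs ys where s: "s = xs @ N # ys" and ds: "distinct s"
      and lt: "\<forall>x\<in>set (xs @ ys). x < N"
      using perm_split_max[OF less.prems] by blast
    define q where "q = length xs"
    have N: "length s = N" using length_perms[OF less.prems] .
    have qN: "q < N" using N s q_def by simp
    have T: "{1..<N} - des (SC s) = ({1..<q} - des (SC xs)) \<union> {q+1..<N}"
      using compl_des_SC_perm[OF s ds] lt N q_def by simp
    show ?thesis
    proof (cases "{q+1..<N} \<subseteq> recoils s")
      case True
      hence xs: "xs \<in> perms q" and R: "recoils s = recoils xs \<union> {q+1..<N}"
        using perm_top_recoils[OF less.prems s] q_def by simp_all
      have "recoils xs \<subseteq> {1..<q}" using recoils_subset[of xs] q_def by simp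
      hence "binary_weight (recoils s) = binary_weight (recoils xs) + binary_weight {q+1..<N}"
        "binary_weight ({1..<N} - des (SC s)) =
           binary_weight ({1..<q} - des (SC xs)) + binary_weight {q+1..<N}"
        unfolding R T binary_weight_def by (auto intro!: sum.union_disjoint intro: finite_subset)
      thus ?thesis using less.IH[OF qN xs] R T by auto
    next
      case False
      then obtain i where "i \<in> {q+1..<N}" "i \<notin> recoils s" by blast
      hence "binary_weight (recoils s) < binary_weight {q+1..<N}"
        using binary_weight_less_if_missing[of "recoils s" N q i] recoils_subset[of s] N by auto
      also have "\<dots> \<le> binary_weight ({1..<N} - des (SC s))"
        unfolding T binary_weight_def by (intro sum_mono2) auto
      finally show ?thesis by simp
    qed
  qed
qed

text \<open>The diagonal is attained by appending the new letters in decreasing order.\<close>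

lemma exists_perm_recoils_compl_des:
  "I \<in> comps N \<Longrightarrow> \<exists>s\<in>perms N. SC s = I \<and> recoils s = {1..<N} - des I"
proof (induction I arbitrary: N rule: rev_induct)
  case Nil
  hence "N = 0" by (simp add: comps_def)
  thus ?case by (intro bexI[of _ "[]"]) (auto simp: perms_def recoils_def)
next
  case (snoc a I)
  define M where "M = N - a"
  have I: "I \<in> comps M" and a: "0 < a" "a \<le> N"
    using snoc.prems by (auto simp: snoc_in_comps_iff M_def)
  obtain s' where s': "s' \<in> perms M" "SC s' = I" "recoils s' = {1..<M} - des I"
    using snoc.IH[OF I] by blast
  have MN: "M < N" "N = M + a" using a M_def by simp_all
  define s where "s = s' @ N # rev [M+1..<N]"
  have "set s' = {1..M}" "length s' = M" "distinct s'"
    using s'(1) length_perms by (auto simp: perms_def)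
  hence s: "s \<in> perms N" using MN by (auto simp: perms_def s_def)
  have "filter (\<lambda>x. M < x) s = rev [M+1..<N+1]"
    using \<open>set s' = {1..M}\<close> MN by (simp add: s_def filter_empty_conv upt_Suc_append)
  hence "{M+1..<N} \<subseteq> recoils s" using filter_greater_eq_rev_upt_iff[OF s less_imp_le[OF MN(1)]]
    by blast
  hence "recoils s = recoils s' \<union> {M+1..<N}"
    using perm_top_recoils(2)[OF s s_def] \<open>length s' = M\<close> by simp
  also have "\<dots> = {1..<N} - des (I @ [a])"
    using compl_des_snoc[OF I a(1)] s'(3) MN by simp
  finally have "recoils s = {1..<N} - des (I @ [a])" .
  moreover have "\<forall>x\<in>set (s' @ rev [M+1..<N]). x < N" using \<open>set s' = {1..M}\<close> MN by auto
  hence "SC s = I @ [a]"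
    using SC_append_max[of s' N "rev [M+1..<N]"] s s'(2) MN by (simp add: perms_def s_def)
  ultimately show ?case using s by blast
qed

section \<open>The dual basis \<open>V'\<close>\<close>

text \<open>\<open>pairUp J x\<close> is the pairing of \<open>x\<close> with \<open>U'_J = U_(conj J)\<close>.\<close>

definition pairUp :: "nat list \<Rightarrow> sym \<Rightarrow> rat" where
  "pairUp J x = (\<Sum>s\<in>{s \<in> perms (sum_list J). SC s = J}. x (RC s))"

definition homogeneous :: "nat \<Rightarrow> sym \<Rightarrow> bool" where
  "homogeneous N x \<longleftrightarrow> (\<forall>K. K \<notin> comps N \<longrightarrow> x K = 0)"

lemma pairUp_eq_sum_comps:
  assumes "sum_list J = N"
  shows "pairUp J x = (\<Sum>K\<in>comps N. of_nat (card {s \<in> perms N. SC s = J \<and> RC s = K}) * x K)"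
proof -
  let ?A = "{s \<in> perms N. SC s = J}"
  have "pairUp J x = (\<Sum>K\<in>comps N. \<Sum>s\<in>{s \<in> ?A. RC s = K}. x (RC s))"
    unfolding pairUp_def assms
    by (rule sum.group[symmetric]) (use finite_perms finite_comps RC_perm_in_comps in auto)
  also have "\<dots> = (\<Sum>K\<in>comps N. of_nat (card {s \<in> perms N. SC s = J \<and> RC s = K}) * x K)"
  proof (rule sum.cong[OF refl])
    fix K
    have "(\<Sum>s\<in>{s \<in> ?A. RC s = K}. x (RC s)) = (\<Sum>s\<in>{s \<in> ?A. RC s = K}. x K)"
      by (rule sum.cong) auto
    also have "{s \<in> ?A. RC s = K} = {s \<in> perms N. SC s = J \<and> RC s = K}" by auto
    finally show "(\<Sum>s\<in>{s \<in> ?A. RC s = K}. x (RC s)) =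
      of_nat (card {s \<in> perms N. SC s = J \<and> RC s = K}) * x K" by simp
  qed
  finally show ?thesis .
qed

lemma pairU_conj:
  assumes "J \<in> comps N"
  shows "pairU (conj J) x = pairUp J x"
proof -
  have "sum_list (conj J) = N" "sum_list J = N"
    using conj_in_comps[OF assms] assms by (auto simp: comps_def)
  thus ?thesis using conj_conj[OF assms]
    unfolding pairU_def pairUp_eq_sum_comps[OF \<open>sum_list J = N\<close>] ucoef_def by simp
qed

lemma pairUp_diff: "pairUp J (\<lambda>K. x K - y K) = pairUp J x - pairUp J y"
  unfolding pairUp_def by (simp add: sum_subtractf)

lemma pairUp_sum: "pairUp J (\<lambda>K. \<Sum>j\<in>A. c j * f j K) = (\<Sum>j\<in>A. c j * pairUp J (f j))"
  unfolding pairUp_def by (simp add: sum_distrib_left sum.swap[of _ A])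

lemma RC_eq_conj_or_less:
  assumes "J \<in> comps N" "s \<in> perms N" "SC s = J"
  shows "RC s = conj J \<or> binary_weight (des (RC s)) < binary_weight (des (conj J))"
  using recoils_triangular[OF assms(2)] RC_eq_iff[OF assms(2) conj_in_comps[OF assms(1)]]
  by (auto simp: assms(3) des_conj[OF assms(1)] des_RC)

lemma card_diagonal_pos:
  assumes "J \<in> comps N"
  shows "0 < card {s \<in> perms N. SC s = J \<and> RC s = conj J}"
proof -
  obtain s where s: "s \<in> perms N" "SC s = J" "recoils s = des (conj J)"
    using exists_perm_recoils_compl_des[OF assms] des_conj[OF assms] by auto
  hence "RC s = conj J" using RC_eq_iff conj_in_comps[OF assms] by blast
  thus ?thesis using s finite_perms card_gt_0_iff by fastforce
qed

definition diagonal_coeff :: "nat \<Rightarrow> nat list \<Rightarrow> rat" where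
  "diagonal_coeff N J = of_nat (card {s \<in> perms N. SC s = J \<and> RC s = conj J})"

definition off_diagonal_part :: "nat \<Rightarrow> nat list \<Rightarrow> sym \<Rightarrow> rat" where
  "off_diagonal_part N J x = (\<Sum>s\<in>{s \<in> perms N. SC s = J \<and> RC s \<noteq> conj J}. x (RC s))"

lemma pairUp_split:
  assumes "J \<in> comps N"
  shows "pairUp J x = diagonal_coeff N J * x (conj J) + off_diagonal_part N J x"
proof -
  have sN: "sum_list J = N" using assms by (simp add: comps_def)
  let ?A = "{s \<in> perms N. SC s = J}"
  have "pairUp J x = (\<Sum>s\<in>{s\<in>?A. RC s = conj J} \<union> {s\<in>?A. RC s \<noteq> conj J}. x (RC s))"
    unfolding pairUp_def sN by (rule sum.cong) auto
  also have "\<dots> = (\<Sum>s\<in>{s\<in>?A. RC s = conj J}. x (conj J)) + (\<Sum>s\<in>{s\<in>?A. RC s \<noteq> conj J}. x (RC s))"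
    by (subst sum.union_disjoint) (use finite_perms in auto)
  finally show ?thesis unfolding diagonal_coeff_def off_diagonal_part_def by (simp add: conj_disj_distribL)
qed

lemma off_diagonal_part_cong:
  assumes "J \<in> comps N"
    and "\<And>K. K \<in> comps N \<Longrightarrow> binary_weight (des K) < binary_weight (des (conj J)) \<Longrightarrow> x K = y K"
  shows "off_diagonal_part N J x = off_diagonal_part N J y"
  unfolding off_diagonal_part_def
  using RC_eq_conj_or_less[OF assms(1)] RC_perm_in_comps assms(2) by (intro sum.cong) auto

lemma diagonal_coeff_nonzero: "J \<in> comps N \<Longrightarrow> diagonal_coeff N J \<noteq> 0"
  using card_diagonal_pos by (simp add: diagonal_coeff_def)

text \<open>Unitriangularity with respect to \<open>binary_weight \<circ> des\<close> makes the pairing with the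
  \<open>U'_J\<close> nondegenerate on each homogeneous component.\<close>

lemma homogeneous_eq_0_if_pairUp_eq_0:
  assumes "homogeneous N x" "\<forall>J\<in>comps N. pairUp J x = 0"
  shows "x K = 0"
proof (cases "K \<in> comps N")
  case True
  thus ?thesis
  proof (induction "binary_weight (des K)" arbitrary: K rule: less_induct)
    case less
    define J where "J = conj K"
    have J: "J \<in> comps N" "conj J = K" using less.prems by (auto simp: J_def conj_in_comps conj_conj)
    have "off_diagonal_part N J x = off_diagonal_part N J (\<lambda>_. 0)"
      using less.hyps J by (intro off_diagonal_part_cong) auto
    hence "diagonal_coeff N J * x K = 0"
      using pairUp_split[OF J(1), of x] assms(2) J by (simp add: off_diagonal_part_def)
    thus ?case using diagonal_coeff_nonzero[OF J(1)] by simp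
  qed
qed (use assms(1) in \<open>simp add: homogeneous_def\<close>)

lemma homogeneous_eqI:
  assumes "homogeneous N x" "homogeneous N y" "\<forall>J\<in>comps N. pairUp J x = pairUp J y"
  shows "x = y"
proof
  fix K
  have "homogeneous N (\<lambda>K. x K - y K)" using assms(1,2) by (simp add: homogeneous_def)
  thus "x K = y K"
    using homogeneous_eq_0_if_pairUp_eq_0[of N "\<lambda>K. x K - y K" K] assms(3) by (simp add: pairUp_diff)
qed

text \<open>Solve the triangular system one weight level at a time.\<close>

lemma exists_homogeneous_pairUp_below:
  "\<exists>v. homogeneous N v \<and> (\<forall>J\<in>comps N. binary_weight (des (conj J)) < w \<longrightarrow> pairUp J v = d J)"
proof (induction w)
  case 0 thus ?case by (intro exI[of _ "\<lambda>_. 0"]) (simp add: homogeneous_def)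
next
  case (Suc w)
  then obtain v where v: "homogeneous N v"
    "\<forall>J\<in>comps N. binary_weight (des (conj J)) < w \<longrightarrow> pairUp J v = d J" by blast
  define v' where "v' K = (if K \<in> comps N \<and> binary_weight (des K) = w
    then (d (conj K) - off_diagonal_part N (conj K) v) / diagonal_coeff N (conj K) else v K)" for K
  have "pairUp J v' = d J" if J: "J \<in> comps N" "binary_weight (des (conj J)) < Suc w" for J
  proof -
    have K: "conj J \<in> comps N" "conj (conj J) = J" using J(1) by (simp_all add: conj_in_comps conj_conj)
    have off: "off_diagonal_part N J v' = off_diagonal_part N J v"
      using J by (intro off_diagonal_part_cong) (auto simp: v'_def)
    show ?thesis
    proof (cases "binary_weight (des (conj J)) < w")
      case True
      hence "v' (conj J) = v (conj J)" by (simp add: v'_def)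
      thus ?thesis using pairUp_split[OF J(1)] off v(2) J(1) True by metis
    next
      case False
      hence "v' (conj J) = (d J - off_diagonal_part N J v) / diagonal_coeff N J"
        using J K by (simp add: v'_def)
      thus ?thesis using pairUp_split[OF J(1), of v'] off diagonal_coeff_nonzero[OF J(1)] by simp
    qed
  qed
  moreover have "homogeneous N v'" using v(1) by (simp add: homogeneous_def v'_def)
  ultimately show ?case by blast
qed

lemma exists_homogeneous_pairUp: "\<exists>v. homogeneous N v \<and> (\<forall>J\<in>comps N. pairUp J v = d J)"
proof -
  define W where "W = Suc (\<Sum>K\<in>comps N. binary_weight (des K))"
  have "binary_weight (des (conj J)) < W" if "J \<in> comps N" for J
    unfolding W_def by (intro le_imp_less_Suc member_le_sum) (use conj_in_comps[OF that] finite_comps in auto)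
  thus ?thesis using exists_homogeneous_pairUp_below[of N W d] by blast
qed

lemma
  assumes "I \<in> comps n"
  shows homogeneous_Vp: "homogeneous n (Vp I)"
    and pairUp_Vp: "J \<in> comps n \<Longrightarrow> pairUp J (Vp I) = (if J = I then 1 else 0)"
proof -
  have cI: "conj I \<in> comps n" "sum_list (conj I) = n"
    using conj_in_comps[OF assms] by (auto simp: comps_def)
  have "(\<forall>J\<in>comps n. pairU J v = (if J = conj I then 1 else 0)) \<longleftrightarrow>
        (\<forall>J\<in>comps n. pairUp J v = (if J = I then 1 else 0))" for v
    using pairU_conj conj_in_comps conj_conj assms by metis
  hence V: "V (conj I) = (THE v. homogeneous n v \<and> (\<forall>J\<in>comps n. pairUp J v = (if J = I then 1 else 0)))"
    unfolding V_def cI(2) homogeneous_def by simp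
  obtain v where v: "homogeneous n v" "\<forall>J\<in>comps n. pairUp J v = (if J = I then 1 else 0)"
    using exists_homogeneous_pairUp[of n "\<lambda>J. if J = I then 1 else 0"] by blast
  have "Vp I = v" unfolding Vp_def V
    using v homogeneous_eqI by (intro the_equality) auto
  thus "homogeneous n (Vp I)" "J \<in> comps n \<Longrightarrow> pairUp J (Vp I) = (if J = I then 1 else 0)"
    using v by auto
qed

section \<open>Multiplication by \<open>\<Lambda>_k\<close>\<close>

lemma replicate_1_in_comps_iff: "replicate k 1 \<in> comps m \<longleftrightarrow> m = k"
  by (auto simp: comps_def sum_list_replicate)

lemma append_replicate_1_in_comps: "A \<in> comps n \<Longrightarrow> A @ replicate k 1 \<in> comps (n + k)"
  by (auto simp: comps_def sum_list_replicate)

lemma glue_replicate_1: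
  "A \<noteq> [] \<Longrightarrow> 0 < k \<Longrightarrow> glue A (replicate k 1) = (butlast A @ [last A + 1]) @ replicate (k - 1) 1"
  by (cases k) (auto simp: glue_def)

lemma glue_replicate_1_in_comps:
  assumes "A \<in> comps n" "A \<noteq> []" "0 < k"
  shows "glue A (replicate k 1) \<in> comps (n + k)"
proof -
  obtain B a where "A = B @ [a]" using assms(2) by (metis rev_exhaust)
  hence "butlast A @ [last A + 1] \<in> comps (n + 1)" using assms(1) by (auto simp: comps_def)
  hence "(butlast A @ [last A + 1]) @ replicate (k - 1) 1 \<in> comps (n + 1 + (k - 1))"
    by (rule append_replicate_1_in_comps)
  thus ?thesis using glue_replicate_1[OF assms(2,3)] assms(3) by simp
qed

lemma des_append_replicate_1:
  "des (A @ replicate m 1) = (if A = [] then {1..<m} else des A \<union> {sum_list A..<sum_list A + m})"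
proof (induction m)
  case (Suc m)
  have snoc: "A @ replicate (Suc m) 1 = (A @ replicate m 1) @ [1]"
    by (simp add: replicate_append_same[symmetric])
  have sum: "sum_list (A @ replicate m 1) = sum_list A + m" by (simp add: sum_list_replicate)
  show ?case
  proof (cases "A = [] \<and> m = 0")
    case False
    hence "des (A @ replicate (Suc m) 1) = insert (sum_list A + m) (des (A @ replicate m 1))"
      unfolding snoc des_snoc sum by simp
    thus ?thesis using Suc.IH False by auto
  qed simp
qed simp

lemma des_glue_replicate_1:
  assumes "A \<in> comps n" "A \<noteq> []" "0 < k"
  shows "des (glue A (replicate k 1)) = des A \<union> {n+1..<n+k}"
proof -
  obtain B a where "A = B @ [a]" using assms(2) by (metis rev_exhaust)
  hence "des (butlast A @ [last A + 1]) = des A" "sum_list (butlast A @ [last A + 1]) = n + 1"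
    using assms(1) by (auto simp: des_snoc comps_def)
  hence "des ((butlast A @ [last A + 1]) @ replicate (k - 1) 1) = des A \<union> {n+1..<n+1+(k-1)}"
    using assms(2) by (simp only: des_append_replicate_1) simp
  thus ?thesis using glue_replicate_1[OF assms(2,3)] assms(3) by simp
qed

lemma des_replicate_1: "des (replicate m 1) = {1..<m}"
  using des_append_replicate_1[of "[]" m] by simp

lemma sum_comps_Lambda: "(\<Sum>B\<in>comps m. Lambda k B * f B) = (if m = k then f (replicate k 1) else 0)"
proof -
  have "(\<Sum>B\<in>comps m. Lambda k B * f B) = (\<Sum>B\<in>comps m. if B = replicate k 1 then f B else 0)"
    by (rule sum.cong) (auto simp: Lambda_def)
  thus ?thesis using finite_comps replicate_1_in_comps_iff by (simp add: sum.delta')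
qed

lemma sum_comps_homogeneous_other_degree:
  "homogeneous n x \<Longrightarrow> m \<noteq> n \<Longrightarrow> (\<Sum>A\<in>comps m. x A * g A) = 0"
  by (auto simp: homogeneous_def comps_def intro!: sum.neutral)

lemma symmult_Lambda:
  assumes "homogeneous n x"
  shows "symmult x (Lambda k) K =
    (if sum_list K = n + k then \<Sum>A\<in>comps n. x A * ribcoef A (replicate k 1) K else 0)"
proof -
  define S where "S = sum_list K"
  have "symmult x (Lambda k) K =
      (\<Sum>m\<in>{0..S}. \<Sum>A\<in>comps m. x A * (\<Sum>B\<in>comps (S - m). Lambda k B * ribcoef A B K))"
    unfolding symmult_def S_def by (simp add: sum_distrib_left mult.assoc)
  also have "\<dots> = (\<Sum>m\<in>{0..S}. \<Sum>A\<in>comps m. x A * (if S - m = k then ribcoef A (replicate k 1) K else 0))"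
    by (simp add: sum_comps_Lambda)
  also have "\<dots> = (\<Sum>m\<in>{0..S}. if m = n then
      \<Sum>A\<in>comps n. x A * (if S - n = k then ribcoef A (replicate k 1) K else 0) else 0)"
    by (intro sum.cong refl) (simp add: sum_comps_homogeneous_other_degree[OF assms])
  also have "\<dots> = (if S = n + k then \<Sum>A\<in>comps n. x A * ribcoef A (replicate k 1) K else 0)"
  proof -
    have "n \<le> S \<Longrightarrow> S - n = k \<longleftrightarrow> S = n + k" by auto
    thus ?thesis by (simp add: sum.delta)
  qed
  finally show ?thesis unfolding S_def .
qed

lemma homogeneous_symmult_Lambda:
  assumes "homogeneous n x" "0 < k"
  shows "homogeneous (n + k) (symmult x (Lambda k))"
  unfolding homogeneous_def
proof (intro allI impI)
  fix K assume K: "K \<notin> comps (n + k)"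
  have "ribcoef A (replicate k 1) K = 0" if "A \<in> comps n" for A
    using append_replicate_1_in_comps[OF that, of k] glue_replicate_1_in_comps[OF that _ assms(2)] K
      assms(2) by (auto simp: ribcoef_def)
  thus "symmult x (Lambda k) K = 0" by (simp add: symmult_Lambda[OF assms(1)])
qed

lemma ribcoef_replicate_1:
  assumes "A \<noteq> []" "0 < k"
  shows "ribcoef A (replicate k 1) K =
    (if K = A @ replicate k 1 \<or> K = glue A (replicate k 1) then 1 else 0)"
proof -
  have "length (glue A (replicate k 1)) < length (A @ replicate k 1)"
    unfolding glue_replicate_1[OF assms] using assms by simp
  hence "glue A (replicate k 1) \<noteq> A @ replicate k 1" by auto
  thus ?thesis using assms by (auto simp: ribcoef_def)
qed

text \<open>The two ribbons of \<open>R_A R_(1^k)\<close> differ only in whether \<open>n\<close> is a descent.\<close>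

lemma ribbon_descents_iff:
  fixes R D :: "nat set"
  assumes "R \<subseteq> {1..<N}" "D \<subseteq> {1..<n}" "n < N"
  shows "(R = D \<union> {n..<N} \<or> R = D \<union> {n+1..<N}) \<longleftrightarrow> R \<inter> {1..<n} = D \<and> {n+1..<N} \<subseteq> R"
proof
  assume h: "R \<inter> {1..<n} = D \<and> {n+1..<N} \<subseteq> R"
  have "R = D \<union> (R \<inter> {n}) \<union> {n+1..<N}"
  proof (intro set_eqI iffI)
    fix i assume "i \<in> R"
    thus "i \<in> D \<union> (R \<inter> {n}) \<union> {n+1..<N}" using h assms(1) by (cases i n rule: linorder_cases) auto
  qed (use h in auto)
  moreover have "insert n {n+1..<N} = {n..<N}" using assms(3) by auto
  ultimately show "R = D \<union> {n..<N} \<or> R = D \<union> {n+1..<N}"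
    by (cases "n \<in> R") auto
qed (use assms(2) in auto)

lemma ribcoef_replicate_1_RC:
  assumes A: "A \<in> comps n" and s: "s \<in> perms (n + k)" and k: "0 < k"
  shows "ribcoef A (replicate k 1) (RC s) =
    (if filter (\<lambda>x. n < x) s = rev [n+1..<n+k+1] \<and> RC (filter (\<lambda>x. x \<le> n) s) = A then 1 else 0)"
proof -
  have top: "filter (\<lambda>x. n < x) s = rev [n+1..<n+k+1] \<longleftrightarrow> {n+1..<n+k} \<subseteq> recoils s"
    by (rule filter_greater_eq_rev_upt_iff[OF s le_add1])
  have low: "RC (filter (\<lambda>x. x \<le> n) s) = A \<longleftrightarrow> recoils s \<inter> {1..<n} = des A"
    using RC_eq_iff[OF filter_le_in_perms[OF s le_add1] A] recoils_filter_le[OF s le_add1] by simp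
  have R: "recoils s \<subseteq> {1..<n+k}" using recoils_subset[of s] length_perms[OF s] by simp
  have "ribcoef A (replicate k 1) (RC s) =
      (if {n+1..<n+k} \<subseteq> recoils s \<and> recoils s \<inter> {1..<n} = des A then 1 else 0)"
  proof (cases "A = []")
    case True
    hence "n = 0" using A by (simp add: comps_def)
    have "ribcoef A (replicate k 1) (RC s) = (if RC s = replicate k 1 then 1 else 0)"
      using True by (simp add: ribcoef_def)
    also have "RC s = replicate k 1 \<longleftrightarrow> recoils s = {1..<k}"
      using RC_eq_iff[OF s append_replicate_1_in_comps[OF A]] True \<open>n = 0\<close> des_replicate_1 by simp
    moreover have "{n+1..<n+k} \<subseteq> recoils s \<and> recoils s \<inter> {1..<n} = des A \<longleftrightarrow> recoils s = {1..<k}"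
      using R \<open>n = 0\<close> True by auto
    ultimately show ?thesis by simp
  next
    case False
    have "sum_list A = n" using A by (simp add: comps_def)
    hence "RC s = A @ replicate k 1 \<or> RC s = glue A (replicate k 1) \<longleftrightarrow>
        recoils s = des A \<union> {n..<n+k} \<or> recoils s = des A \<union> {n+1..<n+k}"
      using RC_eq_iff[OF s append_replicate_1_in_comps[OF A]]
        RC_eq_iff[OF s glue_replicate_1_in_comps[OF A False k]]
        des_append_replicate_1[of A k] des_glue_replicate_1[OF A False k] False by simp
    thus ?thesis using ribcoef_replicate_1[OF False k] ribbon_descents_iff[OF R des_subset[OF A]] k
      by (simp add: conj_commute)
  qed
  thus ?thesis using top low by simp
qed

lemma symmult_Lambda_RC:
  assumes x: "homogeneous n x" and k: "0 < k" and s: "s \<in> perms (n + k)"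
  shows "symmult x (Lambda k) (RC s) =
    (if filter (\<lambda>x. n < x) s = rev [n+1..<n+k+1] then x (RC (filter (\<lambda>x. x \<le> n) s)) else 0)"
proof -
  define \<tau> where "\<tau> = filter (\<lambda>x. x \<le> n) s"
  define top where "top \<longleftrightarrow> filter (\<lambda>x. n < x) s = rev [n+1..<n+k+1]"
  have "sum_list (RC s) = n + k" using RC_perm_in_comps[OF s] by (simp add: comps_def)
  hence "symmult x (Lambda k) (RC s) = (\<Sum>A\<in>comps n. x A * ribcoef A (replicate k 1) (RC s))"
    by (simp add: symmult_Lambda[OF x])
  also have "\<dots> = (\<Sum>A\<in>comps n. if top \<and> A = RC \<tau> then x A else 0)"
  proof (intro sum.cong refl)
    fix A assume "A \<in> comps n"
    show "x A * ribcoef A (replicate k 1) (RC s) = (if top \<and> A = RC \<tau> then x A else 0)"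
      unfolding ribcoef_replicate_1_RC[OF \<open>A \<in> comps n\<close> s k] by (auto simp: \<tau>_def top_def)
  qed
  also have "\<dots> = (if top then x (RC \<tau>) else 0)"
    using RC_perm_in_comps[OF filter_le_in_perms[OF s le_add1]] finite_comps
    by (cases top) (simp_all add: \<tau>_def sum.delta')
  finally show ?thesis unfolding top_def \<tau>_def .
qed

section \<open>Counting shuffles\<close>

lemma shuffles_Cons_right:
  "shuffles xs (y # ys) = (\<Union>p\<in>{..length xs}. (\<lambda>w. take p xs @ y # w) ` shuffles (drop p xs) ys)"
proof (induction xs)
  case (Cons x xs)
  have "{..length (x # xs)} = insert 0 (Suc ` {..length xs})"
    by (simp add: atMost_Suc_eq_insert_0)
  thus ?case by (simp add: Cons.IH image_UN image_image Un_commute)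
qed simp

lemma sum_shuffles_Cons_right:
  assumes "y \<notin> set xs" "y \<notin> set ys"
  shows "(\<Sum>z\<in>shuffles xs (y # ys). f z) =
    (\<Sum>p\<le>length xs. \<Sum>w\<in>shuffles (drop p xs) ys. f (take p xs @ y # w))"
proof -
  have inj: "inj_on (\<lambda>w. take p xs @ y # w) A" for p A by (rule inj_onI) simp
  have disj: "(\<lambda>w. take p xs @ y # w) ` shuffles (drop p xs) ys \<inter>
      (\<lambda>w. take q xs @ y # w) ` shuffles (drop q xs) ys = {}"
    if "p \<le> length xs" "q \<le> length xs" "p \<noteq> q" for p q
  proof (rule ccontr)
    assume "\<not> ?thesis"
    then obtain w w' where w: "w \<in> shuffles (drop p xs) ys" "take p xs @ y # w = take q xs @ y # w'"
      by blast
    have "y \<notin> set (take p xs)" "y \<notin> set w"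
      using assms set_shuffles[OF w(1)] by (auto dest: in_set_takeD in_set_dropD)
    hence "take p xs = take q xs" using w(2) append_Cons_eq_iff by metis
    thus False using that by (metis length_take min.absorb2)
  qed
  show ?thesis unfolding shuffles_Cons_right
    by (subst sum.UNION_disjoint) (auto simp: sum.reindex[OF inj] disj)
qed

lemma SC_insert_max_into_shuffle:
  assumes \<tau>: "\<tau> \<in> perms n" and k: "0 < k" and p: "p \<le> n"
    and w: "w \<in> shuffles (drop p \<tau>) (rev [n+1..<n+k])"
  shows "SC (take p \<tau> @ (n + k) # w) = trunc (SC \<tau>) p @ [n + k - p]"
proof -
  have dt: "distinct \<tau>" and st: "set \<tau> = {1..n}" and lt: "length \<tau> = n"
    using \<tau> length_perms by (auto simp: perms_def)
  have disj: "set (drop p \<tau>) \<inter> set (rev [n+1..<n+k]) = {}" using st set_drop_subset[of p \<tau>] by auto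
  have "distinct w" "set w = set (drop p \<tau>) \<union> {n+1..<n+k}" "length w = n - p + (k - 1)"
    using distinct_disjoint_shuffles[OF _ _ disj w] set_shuffles[OF w] length_shuffles[OF w] dt lt
    by auto
  moreover have "set (take p \<tau>) \<inter> set (drop p \<tau>) = {}"
    using dt by (metis append_take_drop_id distinct_append)
  ultimately have "distinct (take p \<tau> @ (n + k) # w)" "\<forall>x\<in>set (take p \<tau>) \<union> set w. x < n + k"
    using dt st k set_take_subset[of p \<tau>] set_drop_subset[of p \<tau>] by auto
  thus ?thesis
    using SC_append_max SC_take[OF dt] \<open>length w = n - p + (k - 1)\<close> p k by simp
qed

lemma card_shuffles_drop_rev_upt:
  assumes \<tau>: "\<tau> \<in> perms n" and k: "0 < k" and p: "p \<le> n"
  shows "card (shuffles (drop p \<tau>) (rev [n+1..<n+k])) = (n + k - 1 - p) choose (k - 1)"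
proof -
  have "set (drop p \<tau>) \<inter> set (rev [n+1..<n+k]) = {}"
    using \<tau> set_drop_subset[of p \<tau>] by (auto simp: perms_def)
  from card_disjoint_shuffles[OF this]
  have "card (shuffles (drop p \<tau>) (rev [n+1..<n+k])) = (n - p + (k - 1)) choose (n - p)"
    using length_perms[OF \<tau>] by simp
  also have "\<dots> = (n - p + (k - 1)) choose (k - 1)"
    using binomial_symmetric[of "n - p" "n - p + (k - 1)"] by simp
  finally show ?thesis using p k by simp
qed

text \<open>Inserting the decreasing word \<open>n+k, \<dots>, n+1\<close> into \<open>\<tau>\<close>: only the position of \<open>n+k\<close>
  matters for the shape, and the remaining letters can be shuffled freely.\<close>

lemma sum_shuffles_rev_upt_SC:
  assumes \<tau>: "\<tau> \<in> perms n" and k: "0 < k"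
  shows "(\<Sum>s\<in>shuffles \<tau> (rev [n+1..<n+k+1]). if SC s = J then 1 else 0 :: rat) =
    (\<Sum>p\<le>n. of_nat ((n + k - 1 - p) choose (k - 1)) *
        (if J = trunc (SC \<tau>) p @ [n + k - p] then 1 else 0))"
proof -
  have top: "rev [n+1..<n+k+1] = (n + k) # rev [n+1..<n+k]" using k by simp
  have "n + k \<notin> set \<tau>" "length \<tau> = n"
    using \<tau> k length_perms by (auto simp: perms_def)
  hence "(\<Sum>s\<in>shuffles \<tau> ((n + k) # rev [n+1..<n+k]). if SC s = J then 1 else 0 :: rat) =
      (\<Sum>p\<le>n. \<Sum>w\<in>shuffles (drop p \<tau>) (rev [n+1..<n+k]).
         if SC (take p \<tau> @ (n + k) # w) = J then 1 else 0)"
    using sum_shuffles_Cons_right[of "n + k" \<tau> "rev [n+1..<n+k]"] by simp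
  also have "\<dots> = (\<Sum>p\<le>n. of_nat (card (shuffles (drop p \<tau>) (rev [n+1..<n+k]))) *
      (if J = trunc (SC \<tau>) p @ [n + k - p] then 1 else 0))"
    using SC_insert_max_into_shuffle[OF \<tau> k] by (intro sum.cong refl) auto
  also have "\<dots> = (\<Sum>p\<le>n. of_nat ((n + k - 1 - p) choose (k - 1)) *
      (if J = trunc (SC \<tau>) p @ [n + k - p] then 1 else 0))"
    using card_shuffles_drop_rev_upt[OF \<tau> k] by (intro sum.cong refl) simp
  finally show ?thesis unfolding top .
qed

lemma perms_filter_partition_eq_shuffles:
  assumes \<tau>: "\<tau> \<in> perms n" and \<beta>: "distinct \<beta>" "set \<beta> = {n+1..n+k}"
  shows "{s \<in> perms (n + k). filter (\<lambda>x. n < x) s = \<beta> \<and> filter (\<lambda>x. x \<le> n) s = \<tau>} =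
    shuffles \<tau> \<beta>"
proof (intro equalityI subsetI)
  fix s assume "s \<in> {s \<in> perms (n + k). filter (\<lambda>x. n < x) s = \<beta> \<and> filter (\<lambda>x. x \<le> n) s = \<tau>}"
  moreover have "filter (\<lambda>x. \<not> x \<le> n) s = filter (\<lambda>x. n < x) s" by (rule filter_cong) auto
  ultimately show "s \<in> shuffles \<tau> \<beta>"
    using partition_in_shuffles[of s "\<lambda>x. x \<le> n"] by auto
next
  fix s assume s: "s \<in> shuffles \<tau> \<beta>"
  have dt: "distinct \<tau>" and st: "set \<tau> = {1..n}" using \<tau> by (auto simp: perms_def)
  have disj: "set \<tau> \<inter> set \<beta> = {}" using st \<beta> by auto
  have ss: "set s = {1..n+k}" using set_shuffles[OF s] st \<beta> by auto
  have "filter (\<lambda>x. x \<le> n) s = filter (\<lambda>x. x \<in> set \<tau>) s"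
    "filter (\<lambda>x. n < x) s = filter (\<lambda>x. x \<notin> set \<tau>) s"
    using ss st by (auto intro: filter_cong)
  thus "s \<in> {s \<in> perms (n + k). filter (\<lambda>x. n < x) s = \<beta> \<and> filter (\<lambda>x. x \<le> n) s = \<tau>}"
    using filter_shuffles_disjoint1[OF disj s] distinct_disjoint_shuffles[OF dt \<beta>(1) disj s] ss
    by (simp add: perms_def)
qed

section \<open>The pairing of \<open>x \<Lambda>_k\<close> with \<open>U'_J\<close>\<close>

lemma sum_perms_SC_RC:
  "(\<Sum>\<tau>\<in>perms n. g (SC \<tau>) * x (RC \<tau>)) = (\<Sum>I\<in>comps n. g I * pairUp I x)"
proof -
  have "SC ` perms n \<subseteq> comps n" using SC_in_comps length_perms by (auto simp: perms_def)
  hence "(\<Sum>\<tau>\<in>perms n. g (SC \<tau>) * x (RC \<tau>)) =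
      (\<Sum>I\<in>comps n. \<Sum>\<tau>\<in>{\<tau> \<in> perms n. SC \<tau> = I}. g (SC \<tau>) * x (RC \<tau>))"
    by (intro sum.group[symmetric]) (use finite_perms finite_comps in auto)
  also have "\<dots> = (\<Sum>I\<in>comps n. g I * pairUp I x)"
    by (intro sum.cong refl) (auto simp: pairUp_def comps_def sum_distrib_left)
  finally show ?thesis .
qed

text \<open>Only the permutations in which \<open>n+1, \<dots>, n+k\<close> appear in decreasing order contribute;
  grouping them by their restriction \<open>\<tau>\<close> to \<open>1..n\<close> leaves the shuffles of \<open>\<tau>\<close> with
  \<open>n+k, \<dots>, n+1\<close>.\<close>

lemma pairUp_symmult_Lambda_eq_sum_shuffles:
  assumes x: "homogeneous n x" and k: "0 < k" and J: "sum_list J = n + k"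
  shows "pairUp J (symmult x (Lambda k)) =
    (\<Sum>\<tau>\<in>perms n. (\<Sum>s\<in>shuffles \<tau> (rev [n+1..<n+k+1]). if SC s = J then 1 else 0) * x (RC \<tau>))"
proof -
  define \<beta> where "\<beta> = rev [n+1..<n+k+1]"
  define T where "T = {s \<in> perms (n + k). filter (\<lambda>x. n < x) s = \<beta>}"
  have "distinct \<beta>" "set \<beta> = {n+1..n+k}" by (auto simp: \<beta>_def)
  hence fiber: "{s \<in> T. filter (\<lambda>x. x \<le> n) s = \<tau>} = shuffles \<tau> \<beta>" if "\<tau> \<in> perms n" for \<tau>
    using perms_filter_partition_eq_shuffles[OF that] unfolding T_def by auto
  have "pairUp J (symmult x (Lambda k)) =
      (\<Sum>s\<in>perms (n + k). if SC s = J then symmult x (Lambda k) (RC s) else 0)"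
    unfolding pairUp_def J using finite_perms by (rule sum.inter_filter)
  also have "\<dots> = (\<Sum>s\<in>T. if SC s = J then x (RC (filter (\<lambda>x. x \<le> n) s)) else 0)"
    unfolding T_def using finite_perms
    by (subst sum.inter_filter) (auto simp: symmult_Lambda_RC[OF x k] \<beta>_def intro!: sum.cong)
  also have "\<dots> = (\<Sum>\<tau>\<in>perms n. \<Sum>s\<in>{s \<in> T. filter (\<lambda>x. x \<le> n) s = \<tau>}.
      if SC s = J then x (RC (filter (\<lambda>x. x \<le> n) s)) else 0)"
    by (rule sum.group[symmetric]) (use finite_perms filter_le_in_perms in \<open>auto simp: T_def\<close>)
  also have "\<dots> = (\<Sum>\<tau>\<in>perms n. \<Sum>s\<in>{s \<in> T. filter (\<lambda>x. x \<le> n) s = \<tau>}.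
      if SC s = J then x (RC \<tau>) else 0)"
    by (intro sum.cong refl) auto
  also have "\<dots> = (\<Sum>\<tau>\<in>perms n. \<Sum>s\<in>shuffles \<tau> \<beta>. if SC s = J then x (RC \<tau>) else 0)"
    using fiber by (intro sum.cong refl) simp
  finally show ?thesis unfolding \<beta>_def
    by (simp add: sum_distrib_right if_distrib[of "\<lambda>c. c * _"] cong: if_cong)
qed

lemma pairUp_symmult_Lambda:
  assumes x: "homogeneous n x" and k: "0 < k" and J: "sum_list J = n + k"
  shows "pairUp J (symmult x (Lambda k)) =
    (\<Sum>p\<le>n. of_nat ((n + k - 1 - p) choose (k - 1)) *
       (\<Sum>I\<in>comps n. (if J = trunc I p @ [n + k - p] then 1 else 0) * pairUp I x))"
proof -
  define c :: "nat \<Rightarrow> rat" where "c p = of_nat ((n + k - 1 - p) choose (k - 1))" for p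
  have "pairUp J (symmult x (Lambda k)) = (\<Sum>\<tau>\<in>perms n.
      (\<Sum>p\<le>n. c p * (if J = trunc (SC \<tau>) p @ [n + k - p] then 1 else 0)) * x (RC \<tau>))"
    unfolding pairUp_symmult_Lambda_eq_sum_shuffles[OF x k J] c_def
    using sum_shuffles_rev_upt_SC[OF _ k] by (intro sum.cong refl) simp
  also have "\<dots> = (\<Sum>p\<le>n. c p * (\<Sum>\<tau>\<in>perms n.
      (if J = trunc (SC \<tau>) p @ [n + k - p] then 1 else 0) * x (RC \<tau>)))"
    by (simp add: sum_distrib_left sum_distrib_right sum.swap[of _ "perms n"] mult.assoc)
  also have "\<dots> = (\<Sum>p\<le>n. c p *
      (\<Sum>I\<in>comps n. (if J = trunc I p @ [n + k - p] then 1 else 0) * pairUp I x))"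
    using sum_perms_SC_RC[where g = "\<lambda>I. if J = trunc I _ @ [n + k - _] then 1 else 0"]
    by (intro sum.cong refl) simp
  finally show ?thesis unfolding c_def .
qed

lemma pairUp_symmult_Vp_Lambda:
  assumes I: "I \<in> comps n" and k: "0 < k" and J: "J \<in> comps (n + k)"
  shows "pairUp J (symmult (Vp I) (Lambda k)) =
    (\<Sum>j=0..n. of_nat ((k + j - 1) choose (k - 1)) * (if J = trunc I (n - j) @ [k + j] then 1 else 0))"
proof -
  have "(\<Sum>I'\<in>comps n. (if J = trunc I' p @ [n + k - p] then 1 else 0) * pairUp I' (Vp I)) =
      (\<Sum>I'\<in>comps n. if I' = I then (if J = trunc I p @ [n + k - p] then 1 else 0) else 0)" for p
    using pairUp_Vp[OF I] by (intro sum.cong refl) auto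
  also have "\<dots> p = (if J = trunc I p @ [n + k - p] then 1 else 0)" for p
    using finite_comps I by (simp add: sum.delta')
  moreover have "sum_list J = n + k" using J by (simp add: comps_def)
  ultimately have "pairUp J (symmult (Vp I) (Lambda k)) =
      (\<Sum>p=0..n. of_nat ((n + k - 1 - p) choose (k - 1)) * (if J = trunc I p @ [n + k - p] then 1 else 0))"
    using pairUp_symmult_Lambda[OF homogeneous_Vp[OF I] k] by (simp add: atLeast0AtMost)
  also have "\<dots> = (\<Sum>j=0..n. of_nat ((k + j - 1) choose (k - 1)) *
      (if J = trunc I (n - j) @ [k + j] then 1 else 0))"
    by (subst sum.atLeastAtMost_rev) (intro sum.cong refl, auto simp: k)
  finally show ?thesis .
qed

lemma homogeneous_sum:
  "(\<And>j. j \<in> A \<Longrightarrow> homogeneous N (f j)) \<Longrightarrow> homogeneous N (\<lambda>K. \<Sum>j\<in>A. c j * f j K)"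
  by (simp add: homogeneous_def)

theorem mainTheorem5:
  fixes I :: "nat list" and n k :: nat
  assumes "I \<in> comps n" and "k \<ge> 1"
  shows "symmult (Vp I) (Lambda k) =
    (\<lambda>K. \<Sum>j=0..n. of_nat ((k + j - 1) choose (k - 1)) * Vp (trunc I (n - j) @ [k + j]) K)"
proof (rule homogeneous_eqI)
  have k: "0 < k" using assms(2) by simp
  have parts: "trunc I (n - j) @ [k + j] \<in> comps (n + k)" if "j \<in> {0..n}" for j
    using trunc_in_comps[OF assms(1), of "n - j"] that k by (auto simp: comps_def)
  show "homogeneous (n + k) (symmult (Vp I) (Lambda k))"
    using homogeneous_symmult_Lambda[OF homogeneous_Vp[OF assms(1)] k] .
  show "homogeneous (n + k)
      (\<lambda>K. \<Sum>j=0..n. of_nat ((k + j - 1) choose (k - 1)) * Vp (trunc I (n - j) @ [k + j]) K)"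
    using homogeneous_Vp[OF parts] by (rule homogeneous_sum)
  show "\<forall>J\<in>comps (n + k). pairUp J (symmult (Vp I) (Lambda k)) =
      pairUp J (\<lambda>K. \<Sum>j=0..n. of_nat ((k + j - 1) choose (k - 1)) * Vp (trunc I (n - j) @ [k + j]) K)"
    using pairUp_symmult_Vp_Lambda[OF assms(1) k] pairUp_Vp[OF parts] by (simp add: pairUp_sum)
qed

end
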